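(* Let $\mathcal X,\mathcal Y$ be Polish spaces, $(\mu,\nu)\in\mathcal P(\mathcal X)\times\mathcal P(\mathcal Y)$ and $C:\mathcal X\times\mathcal P(\mathcal Y)\to\overline{\mathbb{R}}$ measurable. Then the values of \[ \inf_{(X,Y,\mathcal F):\ X\sim\mu,\ Y\sim\nu,\ \mathcal F\supset\sigma(X)}\mathbb E\big[C(X,\mathscr L(Y|\mathcal F))\big] \quad\text{and}\quad \inf_{P\in\Lambda(\mu,\nu)}\int_{\mathcal X\times\mathcal P(\mathcal Y)}C(x,p)\,P(dx,dp) \] coincide, where the first infimum runs over triplets consisting of random variables $X,Y$ and a $\sigma$-algebra $\mathcal F\supset\sigma(X)$ on an arbitrary probability space.
   Context: $\overline{\mathbb{R}}=\mathbb{R}\cup\{\pm\infty\}$; $\mathscr L(Y|\mathcal F)$ denotes the conditional law of $Y$ given $\mathcal F$. The intensity map $\hat I:\mathcal P(\mathcal X\times\mathcal P(\mathcal Y))\to\mathcal P(\mathcal X\times\mathcal Y)$ is defined by $\hat I(P)(f)=\int\int f(x,y)\,p(dy)\,P(dx,dp)$ for bounded continuous $f$, and $\Lambda(\mu,\nu):=\{P\in\mathcal P(\mathcal X\times\mathcal P(\mathcal Y)):\hat I(P)\text{ has marginals }\mu,\nu\}$. *)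

theory Defs
  imports "HOL-Probability.Probability"
begin

definition ereal_expectation :: "'w measure \<Rightarrow> ('w \<Rightarrow> ereal) \<Rightarrow> ereal" where
  "ereal_expectation M f =
     (let p = (\<integral>\<^sup>+ x. e2ennreal (max 0 (f x)) \<partial>M);
          n = (\<integral>\<^sup>+ x. e2ennreal (max 0 (- f x)) \<partial>M)
      in if p = \<infinity> \<and> n = \<infinity> then \<infinity> else enn2ereal p - enn2ereal n)"

definition is_cond_law :: "'w measure \<Rightarrow> 'w measure \<Rightarrow> ('w \<Rightarrow> 'b::topological_space) \<Rightarrow> ('w \<Rightarrow> 'b measure) \<Rightarrow> bool" where
  "is_cond_law M F Y K \<longleftrightarrow>
     K \<in> measurable F (prob_algebra borel) \<and>
     (\<forall>A\<in>sets F. \<forall>B\<in>sets borel.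
        emeasure M (A \<inter> (Y -` B \<inter> space M)) = (\<integral>\<^sup>+ \<omega>. emeasure (K \<omega>) B * indicator A \<omega> \<partial>M))"

text \<open>Intensity map: I(P)(f) = \<integral>\<integral> f(x,y) p(dy) P(dx,dp).\<close>
definition intensity :: "('a::topological_space \<times> 'b::topological_space measure) measure \<Rightarrow> ('a \<times> 'b) measure" where
  "intensity P = P \<bind> (\<lambda>(x, p). distr p (borel \<Otimes>\<^sub>M borel) (\<lambda>y. (x, y)))"

definition Lambda :: "'a::topological_space measure \<Rightarrow> 'b::topological_space measure \<Rightarrow> ('a \<times> 'b measure) measure set" where
  "Lambda \<mu> \<nu> = {P \<in> space (prob_algebra (borel \<Otimes>\<^sub>M prob_algebra borel)).
      distr (intensity P) borel fst = \<mu> \<and> distr (intensity P) borel snd = \<nu>}"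

definition lambda_value :: "'a::topological_space measure \<Rightarrow> 'b::topological_space measure \<Rightarrow> ('a \<times> 'b measure \<Rightarrow> ereal) \<Rightarrow> ereal" where
  "lambda_value \<mu> \<nu> C = (INF P\<in>Lambda \<mu> \<nu>. ereal_expectation P C)"

text \<open>Infimum over triplets (X, Y, F) on probability spaces whose sample space has type 'w.\<close>
definition triplet_value :: "'w itself \<Rightarrow> 'a::topological_space measure \<Rightarrow> 'b::topological_space measure \<Rightarrow> ('a \<times> 'b measure \<Rightarrow> ereal) \<Rightarrow> ereal" where
  "triplet_value _ \<mu> \<nu> C = Inf {ereal_expectation M (\<lambda>\<omega>. C (X \<omega>, K \<omega>)) | (M :: 'w measure) X Y F K.
      prob_space M \<and> X \<in> borel_measurable M \<and> Y \<in> borel_measurable M \<and>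
      distr M borel X = \<mu> \<and> distr M borel Y = \<nu> \<and>
      subalgebra M F \<and> X \<in> borel_measurable F \<and> is_cond_law M F Y K}"

end

theory Submission
  imports Defs
begin

text \<open>Given a triplet with conditional law \<open>K\<close> of \<open>Y\<close> given \<open>\<F>\<close>, the law \<open>P\<close> of \<open>(X, K)\<close> lies in
  \<open>\<Lambda>(\<mu>, \<nu>)\<close> and has the same cost: membership in \<open>\<Lambda>(\<mu>, \<nu>)\<close> only asks that the first marginal
  of \<open>P\<close> be \<open>\<mu>\<close> and that the mixture \<open>\<integral> p P(dx, dp)\<close> be \<open>\<nu>\<close>, and averaging a conditional law
  gives the law of \<open>Y\<close>. Conversely every \<open>P \<in> \<Lambda>(\<mu>, \<nu>)\<close> is realised on the canonical space
  \<open>\<X> \<times> \<P>(\<Y>) \<times> \<Y>\<close>: draw \<open>(x, p)\<close> from \<open>P\<close> and then \<open>y\<close> from \<open>p\<close>; with \<open>\<F> = \<sigma>(x, p)\<close> the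
  second coordinate is a conditional law of the third. Since triplets carry their conditional law
  explicitly, no hypothesis on \<open>\<mu>\<close>, \<open>\<nu>\<close> or the spaces is needed; Polishness serves in the paper
  only to guarantee that conditional laws exist.\<close>

lemma space_in_prob_algebra: "P \<in> space (prob_algebra M) \<Longrightarrow> space P = space M"
  by (rule sets_eq_imp_space_eq) (simp add: space_prob_algebra)

lemma
  assumes "z \<in> space (A \<Otimes>\<^sub>M prob_algebra B)"
  shows prob_space_snd_pair: "prob_space (snd z)"
    and sets_snd_pair: "sets (snd z) = sets B"
proof -
  have "snd z \<in> space (prob_algebra B)"
    using assms by (simp add: space_pair_measure mem_Times_iff)
  then show "prob_space (snd z)" "sets (snd z) = sets B"
    by (simp_all add: space_prob_algebra)
qed

definition push_kernel ::
    "'c measure \<Rightarrow> (('a \<times> 'b measure) \<times> 'b \<Rightarrow> 'c) \<Rightarrow> 'a \<times> 'b measure \<Rightarrow> 'c measure" where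
  "push_kernel T g z = distr (snd z) T (\<lambda>y. g (z, y))"

lemma measurable_push_kernel:
  assumes "g \<in> (A \<Otimes>\<^sub>M prob_algebra B) \<Otimes>\<^sub>M B \<rightarrow>\<^sub>M T"
  shows "push_kernel T g \<in> A \<Otimes>\<^sub>M prob_algebra B \<rightarrow>\<^sub>M prob_algebra T"
  unfolding push_kernel_def by (rule measurable_distr_prob_space2[where M = B]) (simp_all add: assms)

lemma measurable_push_kernel_section:
  assumes g: "g \<in> (A \<Otimes>\<^sub>M prob_algebra B) \<Otimes>\<^sub>M B \<rightarrow>\<^sub>M T" and z: "z \<in> space (A \<Otimes>\<^sub>M prob_algebra B)"
  shows "(\<lambda>y. g (z, y)) \<in> snd z \<rightarrow>\<^sub>M T"
  using measurable_compose[OF measurable_Pair1'[OF z] g]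
  by (simp add: measurable_cong_sets[OF sets_snd_pair[OF z] refl])

context
  fixes P :: "('a \<times> 'b measure) measure" and A :: "'a measure" and B :: "'b measure"
  assumes P: "P \<in> space (prob_algebra (A \<Otimes>\<^sub>M prob_algebra B))"
begin

lemma measurable_push_kernel_subprob:
  assumes "g \<in> (A \<Otimes>\<^sub>M prob_algebra B) \<Otimes>\<^sub>M B \<rightarrow>\<^sub>M T"
  shows "push_kernel T g \<in> P \<rightarrow>\<^sub>M subprob_algebra T"
proof -
  have sets_P: "sets P = sets (A \<Otimes>\<^sub>M prob_algebra B)"
    using P by (simp add: space_prob_algebra)
  show ?thesis
    using measurable_prob_algebraD[OF measurable_push_kernel[OF assms]]
    by (simp add: measurable_cong_sets[OF sets_P refl])
qed

lemma bind_push_kernel_in_prob_algebra: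
  assumes "g \<in> (A \<Otimes>\<^sub>M prob_algebra B) \<Otimes>\<^sub>M B \<rightarrow>\<^sub>M T"
  shows "P \<bind> push_kernel T g \<in> space (prob_algebra T)"
  using sets_bind'[OF P measurable_push_kernel[OF assms]] prob_space_bind'[OF P measurable_push_kernel[OF assms]]
  by (simp add: space_prob_algebra)

lemma nn_integral_bind_push_kernel:
  assumes g: "g \<in> (A \<Otimes>\<^sub>M prob_algebra B) \<Otimes>\<^sub>M B \<rightarrow>\<^sub>M T" and f: "f \<in> borel_measurable T"
  shows "(\<integral>\<^sup>+\<omega>. f \<omega> \<partial>(P \<bind> push_kernel T g)) = (\<integral>\<^sup>+z. \<integral>\<^sup>+y. f (g (z, y)) \<partial>snd z \<partial>P)"
proof -
  have "(\<integral>\<^sup>+\<omega>. f \<omega> \<partial>(P \<bind> push_kernel T g)) = (\<integral>\<^sup>+z. \<integral>\<^sup>+\<omega>. f \<omega> \<partial>push_kernel T g z \<partial>P)"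
    by (rule nn_integral_bind[OF f measurable_push_kernel_subprob[OF g]])
  also have "\<dots> = (\<integral>\<^sup>+z. \<integral>\<^sup>+y. f (g (z, y)) \<partial>snd z \<partial>P)"
    using f measurable_push_kernel_section[OF g] space_in_prob_algebra[OF P]
    by (intro nn_integral_cong) (simp add: push_kernel_def nn_integral_distr)
  finally show ?thesis .
qed

lemma distr_bind_push_kernel:
  assumes g: "g \<in> (A \<Otimes>\<^sub>M prob_algebra B) \<Otimes>\<^sub>M B \<rightarrow>\<^sub>M T" and h: "h \<in> T \<rightarrow>\<^sub>M S"
  shows "distr (P \<bind> push_kernel T g) S h = P \<bind> push_kernel S (h \<circ> g)"
proof -
  have "distr (P \<bind> push_kernel T g) S h = P \<bind> (\<lambda>z. distr (push_kernel T g z) S h)"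
    using P by (intro distr_bind[OF measurable_push_kernel_subprob[OF g] _ h])
      (auto simp: space_prob_algebra dest: prob_space.not_empty)
  also have "\<dots> = P \<bind> push_kernel S (h \<circ> g)"
    using h measurable_push_kernel_section[OF g] space_in_prob_algebra[OF P]
    by (intro bind_cong) (simp_all add: push_kernel_def distr_distr comp_def)
  finally show ?thesis .
qed

lemma bind_push_kernel_fst:
  assumes f: "f \<in> A \<Otimes>\<^sub>M prob_algebra B \<rightarrow>\<^sub>M T"
  shows "P \<bind> push_kernel T (f \<circ> fst) = distr P T f"
proof -
  have "P \<bind> push_kernel T (f \<circ> fst) = P \<bind> (\<lambda>z. return T (f z))"
    using prob_space_snd_pair[of _ A B] measurable_space[OF f] space_in_prob_algebra[OF P]
    by (intro bind_cong) (simp_all add: push_kernel_def prob_space.distr_const)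
  also have "\<dots> = distr P T f"
    using P f by (intro bind_return_distr')
      (auto simp: space_prob_algebra dest: prob_space.not_empty cong: measurable_cong_sets)
  finally show ?thesis .
qed

lemma bind_push_kernel_snd: "P \<bind> push_kernel B snd = P \<bind> snd"
  using sets_snd_pair[of _ A B] space_in_prob_algebra[OF P]
  by (intro bind_cong) (simp_all add: push_kernel_def distr_id2)

end

lemma intensity_eq_bind_push_kernel:
  "intensity P = P \<bind> push_kernel (borel \<Otimes>\<^sub>M borel) (\<lambda>(z, y). (fst z, y))"
  by (simp add: intensity_def push_kernel_def[abs_def] case_prod_beta')

context
  fixes P :: "('a::topological_space \<times> 'b::topological_space measure) measure"
  assumes P: "P \<in> space (prob_algebra (borel \<Otimes>\<^sub>M prob_algebra borel))"
begin

lemma distr_intensity_fst: "distr (intensity P) borel fst = distr P borel fst"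
proof -
  have "distr (intensity P) borel fst = P \<bind> push_kernel borel (fst \<circ> fst)"
    unfolding intensity_eq_bind_push_kernel
    by (subst distr_bind_push_kernel[OF P]) (simp_all add: comp_def case_prod_beta')
  also have "\<dots> = distr P borel fst"
    by (rule bind_push_kernel_fst[OF P]) simp
  finally show ?thesis .
qed

lemma distr_intensity_snd: "distr (intensity P) borel snd = P \<bind> snd"
proof -
  have "distr (intensity P) borel snd = P \<bind> push_kernel borel snd"
    unfolding intensity_eq_bind_push_kernel
    by (subst distr_bind_push_kernel[OF P]) (simp_all add: comp_def case_prod_beta')
  also have "\<dots> = P \<bind> snd"
    by (rule bind_push_kernel_snd[OF P])
  finally show ?thesis .
qed

end

lemma in_Lambda_iff:
  "P \<in> Lambda \<mu> \<nu> \<longleftrightarrow> P \<in> space (prob_algebra (borel \<Otimes>\<^sub>M prob_algebra borel)) \<and>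
     distr P borel fst = \<mu> \<and> P \<bind> snd = \<nu>"
proof (cases "P \<in> space (prob_algebra (borel \<Otimes>\<^sub>M prob_algebra borel))")
  case True
  then show ?thesis
    by (simp add: Lambda_def distr_intensity_fst distr_intensity_snd)
qed (simp add: Lambda_def)

lemma ereal_expectation_distr:
  assumes g: "g \<in> M \<rightarrow>\<^sub>M N" and C: "C \<in> borel_measurable N"
  shows "ereal_expectation (distr M N g) C = ereal_expectation M (\<lambda>\<omega>. C (g \<omega>))"
proof -
  have "(\<lambda>x. e2ennreal (max 0 (C x))) \<in> borel_measurable N"
    and "(\<lambda>x. e2ennreal (max 0 (- C x))) \<in> borel_measurable N"
    using C by measurable
  with g show ?thesis
    by (simp add: ereal_expectation_def nn_integral_distr)
qed

lemma bind_cond_law_eq_distr: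
  assumes M: "prob_space M" and sub: "subalgebra M F" and Y: "Y \<in> borel_measurable M"
    and K: "is_cond_law M F Y K"
  shows "M \<bind> K = distr M borel Y"
proof (rule measure_eqI)
  have K_meas: "K \<in> M \<rightarrow>\<^sub>M subprob_algebra borel"
    using K measurable_from_subalg[OF sub] by (auto simp: is_cond_law_def intro: measurable_prob_algebraD)
  have M_ne: "space M \<noteq> {}"
    using M by (rule prob_space.not_empty)
  show "sets (M \<bind> K) = sets (distr M borel Y)"
    using sets_bind_measurable[OF K_meas M_ne] by simp
  fix B assume "B \<in> sets (M \<bind> K)"
  then have B: "B \<in> sets borel"
    using sets_bind_measurable[OF K_meas M_ne] by simp
  have "emeasure (M \<bind> K) B = (\<integral>\<^sup>+\<omega>. emeasure (K \<omega>) B \<partial>M)"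
    by (rule emeasure_bind[OF M_ne K_meas B])
  also have "\<dots> = (\<integral>\<^sup>+\<omega>. emeasure (K \<omega>) B * indicator (space M) \<omega> \<partial>M)"
    by (rule nn_integral_cong) simp
  also have "\<dots> = emeasure M (space M \<inter> (Y -` B \<inter> space M))"
  proof -
    have "space M \<in> sets F"
      using sub sets.top[of F] by (simp add: subalgebra_def)
    from K[unfolded is_cond_law_def, THEN conjunct2, rule_format, OF this B] show ?thesis
      by (rule sym)
  qed
  also have "\<dots> = emeasure (distr M borel Y) B"
    using Y B by (simp add: emeasure_distr Int_absorb1)
  finally show "emeasure (M \<bind> K) B = emeasure (distr M borel Y) B" .
qed

lemma measurable_cond_law_pair:
  assumes sub: "subalgebra M F" and X: "X \<in> borel_measurable F" and K: "is_cond_law M F Y K"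
  shows "(\<lambda>\<omega>. (X \<omega>, K \<omega>)) \<in> M \<rightarrow>\<^sub>M borel \<Otimes>\<^sub>M prob_algebra borel"
  using K X by (intro measurable_Pair measurable_from_subalg[OF sub]) (auto simp: is_cond_law_def)

lemma distr_cond_law_in_Lambda:
  assumes M: "prob_space M" and sub: "subalgebra M F" and X: "X \<in> borel_measurable F"
    and Y: "Y \<in> borel_measurable M" and K: "is_cond_law M F Y K"
  shows "distr M (borel \<Otimes>\<^sub>M prob_algebra borel) (\<lambda>\<omega>. (X \<omega>, K \<omega>)) \<in> Lambda (distr M borel X) (distr M borel Y)"
proof -
  note XK = measurable_cond_law_pair[OF sub X K]
  have "distr M (borel \<Otimes>\<^sub>M prob_algebra borel) (\<lambda>\<omega>. (X \<omega>, K \<omega>)) \<bind> snd = M \<bind> K"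
    using XK prob_space.not_empty[OF M] by (subst bind_distr) (auto intro: measurable_prob_algebraD)
  also have "\<dots> = distr M borel Y"
    by (rule bind_cond_law_eq_distr[OF M sub Y K])
  finally show ?thesis
    using XK prob_space.prob_space_distr[OF M XK]
    by (simp add: in_Lambda_iff space_prob_algebra distr_distr comp_def)
qed

lemma lambda_value_le_triplet_value:
  fixes \<mu> :: "'a::topological_space measure" and \<nu> :: "'b::topological_space measure"
    and C :: "'a \<times> 'b measure \<Rightarrow> ereal"
  assumes C: "C \<in> borel_measurable (borel \<Otimes>\<^sub>M prob_algebra borel)"
  shows "lambda_value \<mu> \<nu> C \<le> triplet_value TYPE('w) \<mu> \<nu> C"
  unfolding triplet_value_def lambda_value_def
proof (rule Inf_greatest, elim CollectE exE conjE)
  fix e and M :: "'w measure" and X Y F K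
  assume e: "e = ereal_expectation M (\<lambda>\<omega>. C (X \<omega>, K \<omega>))"
    and M: "prob_space M" and "X \<in> borel_measurable M" and Y: "Y \<in> borel_measurable M"
    and marginals: "distr M borel X = \<mu>" "distr M borel Y = \<nu>"
    and sub: "subalgebra M F" and X: "X \<in> borel_measurable F" and K: "is_cond_law M F Y K"
  show "(INF P\<in>Lambda \<mu> \<nu>. ereal_expectation P C) \<le> e"
    using INF_lower[OF distr_cond_law_in_Lambda[OF M sub X Y K], of "\<lambda>P. ereal_expectation P C"]
    by (simp add: e marginals ereal_expectation_distr[OF measurable_cond_law_pair[OF sub X K] C])
qed

lemma subalgebra_vimage_algebra:
  "f \<in> M \<rightarrow>\<^sub>M N \<Longrightarrow> subalgebra M (vimage_algebra (space M) f N)"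
  unfolding subalgebra_def using sets_image_in_sets[OF refl] by simp

lemma measurable_vimage_algebra_comp:
  "f \<in> X \<rightarrow> space N \<Longrightarrow> g \<in> N \<rightarrow>\<^sub>M L \<Longrightarrow> (\<lambda>x. g (f x)) \<in> vimage_algebra X f N \<rightarrow>\<^sub>M L"
  using measurable_compose[OF measurable_vimage_algebra1] .

definition canonical_space ::
    "('a::topological_space \<times> 'b::topological_space measure) measure \<Rightarrow> ('a \<times> 'b measure \<times> 'b) measure" where
  "canonical_space P =
     P \<bind> push_kernel (borel \<Otimes>\<^sub>M (prob_algebra borel \<Otimes>\<^sub>M borel)) (\<lambda>(z, y). (fst z, snd z, y))"

context
  fixes P :: "('a::topological_space \<times> 'b::topological_space measure) measure"
  assumes P: "P \<in> space (prob_algebra (borel \<Otimes>\<^sub>M prob_algebra borel))"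
begin

lemma
  shows sets_canonical_space: "sets (canonical_space P) = sets (borel \<Otimes>\<^sub>M (prob_algebra borel \<Otimes>\<^sub>M borel))"
    and prob_space_canonical_space: "prob_space (canonical_space P)"
proof -
  have "canonical_space P \<in> space (prob_algebra (borel \<Otimes>\<^sub>M (prob_algebra borel \<Otimes>\<^sub>M borel)))"
    unfolding canonical_space_def by (rule bind_push_kernel_in_prob_algebra[OF P]) simp
  then show "sets (canonical_space P) = sets (borel \<Otimes>\<^sub>M (prob_algebra borel \<Otimes>\<^sub>M borel))"
    and "prob_space (canonical_space P)"
    by (simp_all add: space_prob_algebra)
qed

lemma nn_integral_canonical_space:
  assumes "f \<in> borel_measurable (borel \<Otimes>\<^sub>M (prob_algebra borel \<Otimes>\<^sub>M borel))"
  shows "(\<integral>\<^sup>+\<omega>. f \<omega> \<partial>canonical_space P) = (\<integral>\<^sup>+z. \<integral>\<^sup>+y. f (fst z, snd z, y) \<partial>snd z \<partial>P)"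
  unfolding canonical_space_def using assms by (subst nn_integral_bind_push_kernel[OF P]) simp_all

lemma distr_canonical_space_pair:
  "distr (canonical_space P) (borel \<Otimes>\<^sub>M prob_algebra borel) (\<lambda>\<omega>. (fst \<omega>, fst (snd \<omega>))) = P"
proof -
  have "distr (canonical_space P) (borel \<Otimes>\<^sub>M prob_algebra borel) (\<lambda>\<omega>. (fst \<omega>, fst (snd \<omega>)))
      = P \<bind> push_kernel (borel \<Otimes>\<^sub>M prob_algebra borel) ((\<lambda>z. z) \<circ> fst)"
    unfolding canonical_space_def
    by (subst distr_bind_push_kernel[OF P]) (simp_all add: comp_def case_prod_beta')
  also have "\<dots> = distr P (borel \<Otimes>\<^sub>M prob_algebra borel) (\<lambda>z. z)"
    by (rule bind_push_kernel_fst[OF P]) simp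
  also have "\<dots> = P"
    using P by (simp add: space_prob_algebra distr_id2)
  finally show ?thesis .
qed

lemma distr_canonical_space_fst: "distr (canonical_space P) borel fst = distr P borel fst"
proof -
  have "distr (canonical_space P) borel fst = P \<bind> push_kernel borel (fst \<circ> fst)"
    unfolding canonical_space_def
    by (subst distr_bind_push_kernel[OF P]) (simp_all add: comp_def case_prod_beta')
  also have "\<dots> = distr P borel fst"
    by (rule bind_push_kernel_fst[OF P]) simp
  finally show ?thesis .
qed

lemma distr_canonical_space_snd_snd: "distr (canonical_space P) borel (\<lambda>\<omega>. snd (snd \<omega>)) = P \<bind> snd"
proof -
  have "distr (canonical_space P) borel (\<lambda>\<omega>. snd (snd \<omega>)) = P \<bind> push_kernel borel snd"
    unfolding canonical_space_def
    by (subst distr_bind_push_kernel[OF P]) (simp_all add: comp_def case_prod_beta')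
  also have "\<dots> = P \<bind> snd"
    by (rule bind_push_kernel_snd[OF P])
  finally show ?thesis .
qed

lemma is_cond_law_canonical_space:
  defines "M \<equiv> canonical_space P" and "G \<equiv> \<lambda>\<omega>. (fst \<omega>, fst (snd \<omega>))"
  shows "is_cond_law M (vimage_algebra (space M) G (borel \<Otimes>\<^sub>M prob_algebra borel))
    (\<lambda>\<omega>. snd (snd \<omega>)) (\<lambda>\<omega>. fst (snd \<omega>))"
  unfolding is_cond_law_def
proof (intro conjI ballI)
  have G: "G \<in> M \<rightarrow>\<^sub>M borel \<Otimes>\<^sub>M prob_algebra borel"
    and Y: "(\<lambda>\<omega>. snd (snd \<omega>)) \<in> borel_measurable M"
    by (simp_all add: M_def G_def measurable_cong_sets[OF sets_canonical_space refl])
  have G_space: "G \<in> space M \<rightarrow> space (borel \<Otimes>\<^sub>M prob_algebra borel)"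
    using measurable_space[OF G] by blast
  show "(\<lambda>\<omega>. fst (snd \<omega>)) \<in> vimage_algebra (space M) G (borel \<Otimes>\<^sub>M prob_algebra borel) \<rightarrow>\<^sub>M prob_algebra borel"
    using measurable_vimage_algebra_comp[OF G_space measurable_snd] by (simp add: G_def)
  fix A B assume "A \<in> sets (vimage_algebra (space M) G (borel \<Otimes>\<^sub>M prob_algebra borel))"
    and B: "B \<in> sets (borel :: 'b measure)"
  then obtain A' where A': "A' \<in> sets (borel \<Otimes>\<^sub>M prob_algebra borel)" and A_eq: "A = G -` A' \<inter> space M"
    unfolding sets_vimage_algebra2[OF G_space] by blast
  note snd_z = prob_space_snd_pair[of _ borel borel] sets_snd_pair[of _ borel borel] space_in_prob_algebra[OF P]
  have "A \<inter> ((\<lambda>\<omega>. snd (snd \<omega>)) -` B \<inter> space M) \<in> sets M"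
    unfolding A_eq using measurable_sets[OF G A'] measurable_sets[OF Y B] by blast
  then have "emeasure M (A \<inter> ((\<lambda>\<omega>. snd (snd \<omega>)) -` B \<inter> space M))
      = (\<integral>\<^sup>+\<omega>. indicator (A \<inter> ((\<lambda>\<omega>. snd (snd \<omega>)) -` B \<inter> space M)) \<omega> \<partial>M)"
    by (rule nn_integral_indicator[symmetric])
  also have "\<dots> = (\<integral>\<^sup>+\<omega>. indicator B (snd (snd \<omega>)) * indicator A' (G \<omega>) \<partial>M)"
    by (rule nn_integral_cong) (simp add: A_eq split: split_indicator)
  also have "\<dots> = (\<integral>\<^sup>+z. \<integral>\<^sup>+y. indicator B y * indicator A' z \<partial>snd z \<partial>P)"
    unfolding M_def G_def using A' B by (subst nn_integral_canonical_space) simp_all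
  also have "\<dots> = (\<integral>\<^sup>+z. emeasure (snd z) B * indicator A' z \<partial>P)"
  proof (rule nn_integral_cong)
    fix z assume "z \<in> space P"
    then have sets_z: "sets (snd z) = sets borel"
      using snd_z by simp
    with B show "(\<integral>\<^sup>+y. indicator B y * indicator A' z \<partial>snd z) = emeasure (snd z) B * indicator A' z"
      by (subst nn_integral_multc) (simp_all add: measurable_cong_sets[OF sets_z refl])
  qed
  also have "\<dots> = (\<integral>\<^sup>+z. \<integral>\<^sup>+y. emeasure (snd z) B * indicator A' z \<partial>snd z \<partial>P)"
  proof (rule nn_integral_cong)
    fix z assume "z \<in> space P"
    then have "prob_space (snd z)"
      using snd_z by simp
    then show "emeasure (snd z) B * indicator A' z = (\<integral>\<^sup>+y. emeasure (snd z) B * indicator A' z \<partial>snd z)"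
      by (simp add: prob_space.emeasure_space_1)
  qed
  also have "\<dots> = (\<integral>\<^sup>+\<omega>. emeasure (fst (snd \<omega>)) B * indicator A' (G \<omega>) \<partial>M)"
  proof -
    have "(\<lambda>\<omega>. emeasure (fst (snd \<omega>)) B) \<in> borel_measurable (borel \<Otimes>\<^sub>M (prob_algebra borel \<Otimes>\<^sub>M borel))"
      by (rule measurable_compose[OF measurable_prob_algebraD measurable_emeasure_subprob_algebra[OF B]]) simp
    then have "(\<lambda>\<omega>. emeasure (fst (snd \<omega>)) B * indicator A' (G \<omega>))
        \<in> borel_measurable (borel \<Otimes>\<^sub>M (prob_algebra borel \<Otimes>\<^sub>M borel))"
      using A' by (intro borel_measurable_times_ennreal) (simp_all add: G_def)
    then show ?thesis
      unfolding M_def G_def by (subst nn_integral_canonical_space) simp_all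
  qed
  also have "\<dots> = (\<integral>\<^sup>+\<omega>. emeasure (fst (snd \<omega>)) B * indicator A \<omega> \<partial>M)"
    by (rule nn_integral_cong) (simp add: A_eq split: split_indicator)
  finally show "emeasure M (A \<inter> ((\<lambda>\<omega>. snd (snd \<omega>)) -` B \<inter> space M))
      = (\<integral>\<^sup>+\<omega>. emeasure (fst (snd \<omega>)) B * indicator A \<omega> \<partial>M)" .
qed

end

lemma triplet_value_le_lambda_value:
  fixes \<mu> :: "'a::topological_space measure" and \<nu> :: "'b::topological_space measure"
    and C :: "'a \<times> 'b measure \<Rightarrow> ereal"
  assumes C: "C \<in> borel_measurable (borel \<Otimes>\<^sub>M prob_algebra borel)"
  shows "triplet_value TYPE('a \<times> 'b measure \<times> 'b) \<mu> \<nu> C \<le> lambda_value \<mu> \<nu> C"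
  unfolding triplet_value_def lambda_value_def
proof (rule INF_greatest)
  fix P :: "('a \<times> 'b measure) measure" assume "P \<in> Lambda \<mu> \<nu>"
  then have P: "P \<in> space (prob_algebra (borel \<Otimes>\<^sub>M prob_algebra borel))"
    and marginals: "distr P borel fst = \<mu>" "P \<bind> snd = \<nu>"
    by (auto simp: in_Lambda_iff)
  define M where "M = canonical_space P"
  define G where "G = (\<lambda>\<omega>::'a \<times> 'b measure \<times> 'b. (fst \<omega>, fst (snd \<omega>)))"
  define F where "F = vimage_algebra (space M) G (borel \<Otimes>\<^sub>M prob_algebra borel)"
  have G: "G \<in> M \<rightarrow>\<^sub>M borel \<Otimes>\<^sub>M prob_algebra borel"
    and Y: "(\<lambda>\<omega>. snd (snd \<omega>)) \<in> borel_measurable M"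
    by (simp_all add: M_def G_def measurable_cong_sets[OF sets_canonical_space[OF P] refl])
  have "G \<in> space M \<rightarrow> space (borel \<Otimes>\<^sub>M prob_algebra borel)"
    using measurable_space[OF G] by blast
  from measurable_vimage_algebra_comp[OF this measurable_fst]
  have "fst \<in> borel_measurable F"
    by (simp add: F_def G_def)
  moreover have "ereal_expectation P C = ereal_expectation M (\<lambda>\<omega>. C (fst \<omega>, fst (snd \<omega>)))"
    using ereal_expectation_distr[OF G C] distr_canonical_space_pair[OF P] by (simp add: M_def G_def)
  ultimately show "Inf {ereal_expectation M (\<lambda>\<omega>. C (X \<omega>, K \<omega>)) | (M :: ('a \<times> 'b measure \<times> 'b) measure) X Y F K.
      prob_space M \<and> X \<in> borel_measurable M \<and> Y \<in> borel_measurable M \<and>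
      distr M borel X = \<mu> \<and> distr M borel Y = \<nu> \<and>
      subalgebra M F \<and> X \<in> borel_measurable F \<and> is_cond_law M F Y K} \<le> ereal_expectation P C"
    using Y subalgebra_vimage_algebra[OF G] measurable_from_subalg[OF subalgebra_vimage_algebra[OF G]]
      prob_space_canonical_space[OF P] is_cond_law_canonical_space[OF P]
      distr_canonical_space_fst[OF P] distr_canonical_space_snd_snd[OF P] marginals
    by (intro Inf_lower CollectI exI[where x = M] exI[where x = fst] exI[where x = "\<lambda>\<omega>. snd (snd \<omega>)"]
        exI[where x = F] exI[where x = "\<lambda>\<omega>. fst (snd \<omega>)"]) (simp add: M_def F_def G_def)
qed

theorem corollary3p3:
  fixes \<mu> :: "'a::polish_space measure" and \<nu> :: "'b::polish_space measure"
    and C :: "'a \<times> 'b measure \<Rightarrow> ereal"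
  assumes "prob_space \<mu>" "sets \<mu> = sets borel"
    and "prob_space \<nu>" "sets \<nu> = sets borel"
    and "C \<in> borel_measurable (borel \<Otimes>\<^sub>M prob_algebra borel)"
  shows "lambda_value \<mu> \<nu> C \<le> triplet_value TYPE('w) \<mu> \<nu> C
    \<and> triplet_value TYPE('a \<times> 'b measure \<times> 'b) \<mu> \<nu> C = lambda_value \<mu> \<nu> C"
  using lambda_value_le_triplet_value[OF assms(5), where 'w = 'w]
    lambda_value_le_triplet_value[OF assms(5), where 'w = "'a \<times> 'b measure \<times> 'b"]
    triplet_value_le_lambda_value[OF assms(5)]
  by (simp add: antisym)

end
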